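(* For $n\ge 1$, the complete graph $K_n$ satisfies $\nu_*(K_n)=\frac{(n-1)n(n+1)(n+4)}{12}$.
   Context: For a finite simple graph $G=(V,E)$ with $\ell=|V|+|E|$, a construction sequence (c-sequence) is a bijection $x:\{1,\dots,\ell\}\to V\sqcup E$ such that every edge $e=uw$ satisfies $x^{-1}(e)>\max\{x^{-1}(u),x^{-1}(w)\}$. The cost of $x$ is $\nu(x)=\sum_{e=uw\in E}\big(2x^{-1}(e)-x^{-1}(u)-x^{-1}(w)\big)$, and $\nu_*(G)$ is the minimum of $\nu(x)$ over all c-sequences for $G$. *)

theory Defs
  imports Complex_Main
begin

definition simple_graph :: "'a set \<Rightarrow> 'a set set \<Rightarrow> bool" where
  "simple_graph V E \<longleftrightarrow> finite V \<and> (\<forall>e\<in>E. e \<subseteq> V \<and> card e = 2)"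

definition elems :: "'a set \<Rightarrow> 'a set set \<Rightarrow> ('a + 'a set) set" where
  "elems V E = Inl ` V \<union> Inr ` E"

definition c_sequence :: "'a set \<Rightarrow> 'a set set \<Rightarrow> (nat \<Rightarrow> 'a + 'a set) \<Rightarrow> bool" where
  "c_sequence V E x \<longleftrightarrow>
     bij_betw x {1..card V + card E} (elems V E) \<and>
     (\<forall>e\<in>E. \<forall>v\<in>e. inv_into {1..card V + card E} x (Inr e) >
                     inv_into {1..card V + card E} x (Inl v))"

definition cseq_cost :: "'a set \<Rightarrow> 'a set set \<Rightarrow> (nat \<Rightarrow> 'a + 'a set) \<Rightarrow> int" where
  "cseq_cost V E x =
     (let pos = inv_into {1..card V + card E} x in
      \<Sum>e\<in>E. 2 * int (pos (Inr e)) - (\<Sum>v\<in>e. int (pos (Inl v))))"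

definition nu_star :: "'a set \<Rightarrow> 'a set set \<Rightarrow> int" where
  "nu_star V E = Min (cseq_cost V E ` {x. c_sequence V E x})"

definition K_vertices :: "nat \<Rightarrow> nat set" where
  "K_vertices n = {1..n}"

definition K_edges :: "nat \<Rightarrow> nat set set" where
  "K_edges n = {{u, v} | u v. u \<in> {1..n} \<and> v \<in> {1..n} \<and> u \<noteq> v}"

end

theory Submission
  imports Defs
begin

text \<open>Write \<open>pos\<close> for the inverse of a construction sequence and L = |V| + |E|. Since the
  positions of all elements form a permutation of 1..L, the cost of any c-sequence equals
  L(L+1) minus the sum of (deg v + 2) pos v over the vertices; for K_n every degree is n - 1.
  If v is the r-th vertex to appear, everything up to v is one of the first r vertices or
  an edge among the first r - 1 of them, so pos v \<le> (r choose 2) + 1. This bound is attained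
  by listing, for k = 1, ..., n, the vertex k followed by the edges {j, k} with j < k, which
  makes the cost minimal; the closed form is then a polynomial identity.\<close>

definition degree :: "'a set set \<Rightarrow> 'a \<Rightarrow> nat" where
  "degree E v = card {e \<in> E. v \<in> e}"

definition position :: "'a set \<Rightarrow> 'a set set \<Rightarrow> (nat \<Rightarrow> 'a + 'a set) \<Rightarrow> 'a + 'a set \<Rightarrow> nat" where
  "position V E x = inv_into {1..card V + card E} x"

lemma bij_betw_of_inj_on_card:
  assumes "inj_on f A" "f ` A \<subseteq> B" "finite B" "card A = card B"
  shows "bij_betw f A B"
proof -
  have "f ` A = B"
    using assms by (intro card_subset_eq) (auto simp: card_image)
  with assms(1) show ?thesis by (rule bij_betw_imageI)
qed

lemma binomial_mono_left:
  assumes "m \<le> n"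
  shows "m choose k \<le> n choose k"
proof -
  have "{B. B \<subseteq> {..<m} \<and> card B = k} \<subseteq> {B. B \<subseteq> {..<n} \<and> card B = k}"
    using assms by auto
  then have "card {B. B \<subseteq> {..<m} \<and> card B = k} \<le> card {B. B \<subseteq> {..<n} \<and> card B = k}"
    by (rule card_mono[rotated]) simp
  then show ?thesis
    by (simp add: n_subsets)
qed

lemma bij_betw_rank:
  fixes f :: "'a \<Rightarrow> 'b::linorder"
  assumes "finite A" "inj_on f A"
  shows "bij_betw (\<lambda>a. card {b \<in> A. f b \<le> f a}) A {1..card A}"
proof (rule bij_betw_of_inj_on_card)
  have less: "card {b \<in> A. f b \<le> f a} < card {b \<in> A. f b \<le> f a'}"
    if "a' \<in> A" "f a < f a'" for a a'
    using that assms(1) by (intro psubset_card_mono) (auto, force)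
  show "inj_on (\<lambda>a. card {b \<in> A. f b \<le> f a}) A"
  proof (rule inj_onI)
    fix a a' assume "a \<in> A" "a' \<in> A" "card {b \<in> A. f b \<le> f a} = card {b \<in> A. f b \<le> f a'}"
    then show "a = a'"
      using less[of a' a] less[of a a'] inj_onD[OF assms(2)] by (metis less_irrefl linorder_neqE)
  qed
  show "(\<lambda>a. card {b \<in> A. f b \<le> f a}) ` A \<subseteq> {1..card A}"
    using assms(1) by (auto intro!: card_mono simp: Suc_le_eq card_gt_0_iff)
qed auto

lemma card_bij_betw_atLeastAtMost_le:
  assumes "bij_betw f A {1..N}" "a \<in> A"
  shows "card {b \<in> A. f b \<le> f a} = f a"
proof -
  have "f ` {b \<in> A. f b \<le> f a} = {i \<in> f ` A. i \<le> f a}"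
    by blast
  also have "\<dots> = {1..f a}"
    using bij_betw_imp_surj_on[OF assms(1)] bij_betw_apply[OF assms] by auto
  finally have "card (f ` {b \<in> A. f b \<le> f a}) = f a"
    by simp
  moreover have "inj_on f {b \<in> A. f b \<le> f a}"
    using bij_betw_imp_inj_on[OF assms(1)] by (rule inj_on_subset) blast
  ultimately show ?thesis
    by (simp add: card_image)
qed

lemma finite_edges: "simple_graph V E \<Longrightarrow> finite E"
  unfolding simple_graph_def by (meson Pow_iff finite_Pow_iff finite_subset subsetI)

lemma card_elems: "finite V \<Longrightarrow> finite E \<Longrightarrow> card (elems V E) = card V + card E"
  unfolding elems_def by (subst card_Un_disjoint) (auto simp: card_image)

lemma bij_betw_position:
  "c_sequence V E x \<Longrightarrow> bij_betw (position V E x) (elems V E) {1..card V + card E}"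
  unfolding c_sequence_def position_def by (simp add: bij_betw_inv_into)

lemma position_vertex_less_edge:
  "c_sequence V E x \<Longrightarrow> e \<in> E \<Longrightarrow> v \<in> e \<Longrightarrow> position V E x (Inl v) < position V E x (Inr e)"
  unfolding c_sequence_def position_def by blast

lemma cseq_cost_position:
  "cseq_cost V E x
     = (\<Sum>e\<in>E. 2 * int (position V E x (Inr e)) - (\<Sum>v\<in>e. int (position V E x (Inl v))))"
  by (simp add: cseq_cost_def position_def Let_def)

lemma cseq_cost_eq_degree:
  assumes "simple_graph V E" "c_sequence V E x"
  defines "L \<equiv> card V + card E"
  defines "pos \<equiv> position V E x"
  shows "cseq_cost V E x = int (L * (L + 1)) - (\<Sum>v\<in>V. int (degree E v + 2) * int (pos (Inl v)))"
proof -
  have fin: "finite V" "finite E"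
    using assms(1) finite_edges by (auto simp: simple_graph_def)
  have edge_sub: "e \<subseteq> V" if "e \<in> E" for e
    using assms(1) that by (simp add: simple_graph_def)
  have "(\<Sum>v\<in>V. int (pos (Inl v))) + (\<Sum>e\<in>E. int (pos (Inr e))) = (\<Sum>a\<in>elems V E. int (pos a))"
    unfolding elems_def using fin by (subst sum.union_disjoint) (auto simp: sum.reindex)
  also have "\<dots> = (\<Sum>i\<in>{1..L}. int i)"
    using sum.reindex_bij_betw[OF bij_betw_position[OF assms(2)], of int] by (simp add: L_def pos_def)
  finally have total: "2 * (\<Sum>v\<in>V. int (pos (Inl v))) + 2 * (\<Sum>e\<in>E. int (pos (Inr e))) = int (L * (L + 1))"
    using double_gauss_sum_from_Suc_0[of L, where 'a=int] by (simp add: distrib_left[symmetric] algebra_simps)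
  have "(\<Sum>e\<in>E. \<Sum>v\<in>e. int (pos (Inl v))) = (\<Sum>e\<in>E. \<Sum>v\<in>{v \<in> V. v \<in> e}. int (pos (Inl v)))"
    using edge_sub by (intro sum.cong) auto
  also have "\<dots> = (\<Sum>v\<in>V. \<Sum>e\<in>{e \<in> E. v \<in> e}. int (pos (Inl v)))"
    using fin by (intro sum.swap_restrict)
  also have "\<dots> = (\<Sum>v\<in>V. int (degree E v) * int (pos (Inl v)))"
    by (simp add: degree_def)
  finally have double_count: "(\<Sum>e\<in>E. \<Sum>v\<in>e. int (pos (Inl v))) = \<dots>" .
  have "cseq_cost V E x = (\<Sum>e\<in>E. 2 * int (pos (Inr e)) - (\<Sum>v\<in>e. int (pos (Inl v))))"
    unfolding pos_def by (rule cseq_cost_position)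
  also have "\<dots> = 2 * (\<Sum>e\<in>E. int (pos (Inr e))) - (\<Sum>v\<in>V. int (degree E v) * int (pos (Inl v)))"
    by (simp add: sum_subtractf sum_distrib_left double_count)
  also have "\<dots> = int (L * (L + 1)) - (\<Sum>v\<in>V. int (degree E v + 2) * int (pos (Inl v)))"
    using total by (simp add: algebra_simps sum.distrib sum_distrib_left)
  finally show ?thesis .
qed

lemma position_vertex_le_rank:
  assumes "simple_graph V E" "c_sequence V E x" "v \<in> V"
  defines "pos \<equiv> position V E x"
  shows "pos (Inl v) \<le> (card {u \<in> V. pos (Inl u) \<le> pos (Inl v)} choose 2) + 1"
proof -
  define A where "A = {u \<in> V. pos (Inl u) < pos (Inl v)}"
  define P where "P = {a \<in> elems V E. pos a \<le> pos (Inl v)}"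
  have bij: "bij_betw pos (elems V E) {1..card V + card E}"
    unfolding pos_def using assms(2) by (rule bij_betw_position)
  have fin: "finite V" "finite E" "finite A"
    using assms(1) finite_edges by (auto simp: simple_graph_def A_def)
  have v_elem: "Inl v \<in> elems V E"
    using assms(3) by (simp add: elems_def)
  have vertex_inj: "u = v" if "u \<in> V" "pos (Inl u) = pos (Inl v)" for u
    using bij_betw_imp_inj_on[OF bij] v_elem that by (auto simp: elems_def dest: inj_onD)
  have rank: "{u \<in> V. pos (Inl u) \<le> pos (Inl v)} = insert v A"
    using assms(3) vertex_inj by (auto simp: A_def order_le_less)
  have card_P: "card P = pos (Inl v)"
    unfolding P_def using bij v_elem by (rule card_bij_betw_atLeastAtMost_le)
  have P_sub: "P \<subseteq> Inl ` insert v A \<union> Inr ` {e. e \<subseteq> A \<and> card e = 2}"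
  proof
    fix a assume a: "a \<in> P"
    show "a \<in> Inl ` insert v A \<union> Inr ` {e. e \<subseteq> A \<and> card e = 2}"
    proof (cases a)
      case (Inl u)
      then show ?thesis
        using a vertex_inj by (cases "u = v") (auto simp: P_def elems_def A_def order_le_less)
    next
      case (Inr e)
      with a have "e \<in> E" "pos (Inr e) \<le> pos (Inl v)"
        by (auto simp: P_def elems_def)
      then have "e \<subseteq> A" "card e = 2"
        using assms(1) position_vertex_less_edge[OF assms(2)]
        by (fastforce simp: A_def pos_def simple_graph_def)+
      with Inr show ?thesis by simp
    qed
  qed
  have "pos (Inl v) \<le> card (Inl ` insert v A \<union> Inr ` {e. e \<subseteq> A \<and> card e = 2})"
    unfolding card_P[symmetric] using P_sub fin by (intro card_mono) auto
  also have "\<dots> \<le> card (insert v A) + card {e. e \<subseteq> A \<and> card e = 2}"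
    by (rule order_trans[OF card_Un_le add_mono[OF card_image_le card_image_le]]) (use fin in auto)
  also have "\<dots> = (card (insert v A) choose 2) + 1"
    using fin by (simp add: n_subsets A_def numeral_2_eq_2)
  finally show ?thesis
    unfolding rank .
qed

lemma sum_position_vertices_le:
  assumes "simple_graph V E" "c_sequence V E x"
  shows "(\<Sum>v\<in>V. position V E x (Inl v)) \<le> (\<Sum>k = 1..card V. (k choose 2) + 1)"
proof -
  let ?pos = "position V E x"
  let ?rank = "\<lambda>v. card {u \<in> V. ?pos (Inl u) \<le> ?pos (Inl v)}"
  have "inj_on (\<lambda>v. ?pos (Inl v)) V"
    using bij_betw_imp_inj_on[OF bij_betw_position[OF assms(2)]]
    by (auto simp: elems_def intro!: inj_onI dest: inj_onD)
  then have rank_bij: "bij_betw ?rank V {1..card V}"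
    using assms(1) by (intro bij_betw_rank) (auto simp: simple_graph_def)
  have "(\<Sum>v\<in>V. ?pos (Inl v)) \<le> (\<Sum>v\<in>V. (?rank v choose 2) + 1)"
    using assms by (intro sum_mono position_vertex_le_rank)
  also have "\<dots> = (\<Sum>k = 1..card V. (k choose 2) + 1)"
    using rank_bij by (rule sum.reindex_bij_betw)
  finally show ?thesis .
qed

lemma cseq_cost_ge_regular:
  assumes "simple_graph V E" "c_sequence V E x" "\<And>v. v \<in> V \<Longrightarrow> degree E v = d"
  defines "L \<equiv> card V + card E"
  shows "int (L * (L + 1)) - int (d + 2) * int (\<Sum>k = 1..card V. (k choose 2) + 1) \<le> cseq_cost V E x"
proof -
  have "(\<Sum>v\<in>V. int (degree E v + 2) * int (position V E x (Inl v)))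
      = int (d + 2) * int (\<Sum>v\<in>V. position V E x (Inl v))"
    using assms(3) by (simp add: sum_distrib_left)
  also have "\<dots> \<le> int (d + 2) * int (\<Sum>k = 1..card V. (k choose 2) + 1)"
    using sum_position_vertices_le[OF assms(1,2)]
    by (intro mult_left_mono) (simp_all only: of_nat_le_iff of_nat_0_le_iff)
  finally show ?thesis
    unfolding cseq_cost_eq_degree[OF assms(1,2)] L_def by linarith
qed

lemma nu_star_eqI:
  assumes "simple_graph V E" "c_sequence V E x"
    and "\<And>y. c_sequence V E y \<Longrightarrow> cseq_cost V E x \<le> cseq_cost V E y"
  shows "nu_star V E = cseq_cost V E x"
proof -
  let ?L = "card V + card E"
  have "cseq_cost V E y \<le> int (?L * (?L + 1))" if "c_sequence V E y" for y
    unfolding cseq_cost_eq_degree[OF assms(1) that] by (simp add: sum_nonneg)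
  then have "cseq_cost V E ` {y. c_sequence V E y} \<subseteq> {cseq_cost V E x..int (?L * (?L + 1))}"
    using assms(3) by auto
  then have "finite (cseq_cost V E ` {y. c_sequence V E y})"
    by (rule finite_subset) simp
  then show ?thesis
    unfolding nu_star_def using assms(2,3) by (intro Min_eqI) auto
qed

lemma K_edges_eq: "K_edges n = {e. e \<subseteq> {1..n} \<and> card e = 2}"
  unfolding K_edges_def card_2_iff by blast

lemma simple_graph_K: "simple_graph (K_vertices n) (K_edges n)"
  by (simp add: simple_graph_def K_vertices_def K_edges_eq)

lemma card_K_edges: "card (K_edges n) = n choose 2"
  by (simp add: K_edges_eq n_subsets)

lemma degree_K:
  assumes "v \<in> K_vertices n"
  shows "degree (K_edges n) v = n - 1"
proof -
  have "{e \<in> K_edges n. v \<in> e} = (\<lambda>u. {u, v}) ` ({1..n} - {v})"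
    unfolding K_edges_def using assms by (auto simp: K_vertices_def) blast
  moreover have "inj_on (\<lambda>u. {u, v}) ({1..n} - {v})"
    by (auto simp: inj_on_def doubleton_eq_iff)
  ultimately show ?thesis
    using assms by (simp add: degree_def card_image K_vertices_def)
qed

lemma K_edge_Min_Max:
  assumes "e \<in> K_edges n"
  shows "e = {Min e, Max e}" "1 \<le> Min e" "Min e < Max e" "Max e \<le> n"
proof -
  from assms obtain u v where "e = {u, v}" "u \<in> {1..n}" "v \<in> {1..n}" "u \<noteq> v"
    unfolding K_edges_def by auto
  then show "e = {Min e, Max e}" "1 \<le> Min e" "Min e < Max e" "Max e \<le> n"
    by (auto simp: min_def max_def)
qed

fun greedy_block :: "nat + nat set \<Rightarrow> nat" where
  "greedy_block (Inl k) = k"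
| "greedy_block (Inr e) = Max e"

fun greedy_offset :: "nat + nat set \<Rightarrow> nat" where
  "greedy_offset (Inl k) = 0"
| "greedy_offset (Inr e) = Min e"

text \<open>Vertex k is placed at (k choose 2) + 1 and followed by the edges {j, k}, j < k, so the
  block of k fills the positions (k choose 2) + 1, ..., Suc k choose 2.\<close>
definition greedy_pos :: "nat + nat set \<Rightarrow> nat" where
  "greedy_pos a = (greedy_block a choose 2) + 1 + greedy_offset a"

definition greedy_cseq :: "nat \<Rightarrow> nat \<Rightarrow> nat + nat set" where
  "greedy_cseq n = inv_into (elems (K_vertices n) (K_edges n)) greedy_pos"

lemma choose_two_block_inj:
  fixes b b' i i' :: nat
  assumes "i < b" "i' < b'" "(b choose 2) + i = (b' choose 2) + i'"
  shows "b = b'"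
proof -
  have less: "(b choose 2) + i < (b' choose 2) + i'" if "i < b" "b < b'" for b b' i i' :: nat
  proof -
    have "(b choose 2) + i < Suc b choose 2"
      using that by (simp add: numeral_2_eq_2)
    also have "\<dots> \<le> b' choose 2"
      using that by (intro binomial_mono_left) simp
    finally show ?thesis by simp
  qed
  show ?thesis
    using less[of i b b' i'] less[of i' b' b i] assms by (metis less_irrefl linorder_neqE_nat)
qed

lemma greedy_block_offset_bounds:
  assumes "a \<in> elems (K_vertices n) (K_edges n)"
  shows "greedy_offset a < greedy_block a" "greedy_block a \<le> n"
  using assms K_edge_Min_Max by (auto simp: elems_def K_vertices_def)

definition greedy_decode :: "nat \<Rightarrow> nat \<Rightarrow> nat + nat set" where
  "greedy_decode b i = (if i = 0 then Inl b else Inr {i, b})"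

lemma K_element_decode:
  assumes "a \<in> elems (K_vertices n) (K_edges n)"
  shows "a = greedy_decode (greedy_block a) (greedy_offset a)"
proof (cases a)
  case (Inr e)
  with assms have "e \<in> K_edges n"
    by (simp add: elems_def image_iff)
  with Inr show ?thesis
    using K_edge_Min_Max[of e n] by (simp add: greedy_decode_def)
qed (simp add: greedy_decode_def)

lemma bij_betw_greedy_pos:
  "bij_betw greedy_pos (elems (K_vertices n) (K_edges n)) {1..n + (n choose 2)}"
proof (rule bij_betw_of_inj_on_card)
  let ?X = "elems (K_vertices n) (K_edges n)"
  show "inj_on greedy_pos ?X"
  proof (rule inj_onI)
    fix a a' assume a: "a \<in> ?X" and a': "a' \<in> ?X" and eq: "greedy_pos a = greedy_pos a'"
    have block: "greedy_block a = greedy_block a'"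
      using choose_two_block_inj[OF greedy_block_offset_bounds(1)[OF a] greedy_block_offset_bounds(1)[OF a']] eq
      by (simp add: greedy_pos_def)
    with eq have offset: "greedy_offset a = greedy_offset a'"
      by (simp add: greedy_pos_def)
    have "a = greedy_decode (greedy_block a) (greedy_offset a)"
      using a by (rule K_element_decode)
    also have "\<dots> = a'"
      unfolding block offset using a' by (rule K_element_decode[symmetric])
    finally show "a = a'" .
  qed
  show "greedy_pos ` ?X \<subseteq> {1..n + (n choose 2)}"
  proof (rule image_subsetI)
    fix a assume a: "a \<in> ?X"
    have "greedy_pos a \<le> Suc (greedy_block a) choose 2"
      using greedy_block_offset_bounds(1)[OF a] by (simp add: greedy_pos_def numeral_2_eq_2)
    also have "\<dots> \<le> Suc n choose 2"
      using greedy_block_offset_bounds(2)[OF a] by (intro binomial_mono_left) simp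
    finally show "greedy_pos a \<in> {1..n + (n choose 2)}"
      by (simp add: greedy_pos_def numeral_2_eq_2)
  qed
  show "card ?X = card {1..n + (n choose 2)}"
    using card_elems[of "K_vertices n" "K_edges n"] finite_edges[OF simple_graph_K[of n]]
    by (simp add: card_K_edges K_vertices_def)
qed simp

lemma position_greedy_cseq:
  assumes "a \<in> elems (K_vertices n) (K_edges n)"
  shows "position (K_vertices n) (K_edges n) (greedy_cseq n) a = greedy_pos a"
  unfolding position_def greedy_cseq_def
  using inv_into_inv_into_eq[OF bij_betw_greedy_pos assms]
  by (simp add: card_K_edges K_vertices_def)

lemma c_sequence_greedy_cseq: "c_sequence (K_vertices n) (K_edges n) (greedy_cseq n)"
  unfolding c_sequence_def position_def[symmetric]
proof (intro conjI ballI)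
  show "bij_betw (greedy_cseq n) {1..card (K_vertices n) + card (K_edges n)} (elems (K_vertices n) (K_edges n))"
    unfolding greedy_cseq_def using bij_betw_inv_into[OF bij_betw_greedy_pos]
    by (simp add: card_K_edges K_vertices_def)
next
  fix e v assume e: "e \<in> K_edges n" and v: "v \<in> e"
  then have elems: "Inr e \<in> elems (K_vertices n) (K_edges n)" "Inl v \<in> elems (K_vertices n) (K_edges n)"
    by (auto simp: elems_def K_vertices_def K_edges_eq)
  have "v \<le> Max e"
    using e v unfolding K_edges_def by auto
  then have "(v choose 2) + 1 < (Max e choose 2) + 1 + Min e"
    using binomial_mono_left[of v "Max e" 2] K_edge_Min_Max(2)[OF e] by linarith
  then show "position (K_vertices n) (K_edges n) (greedy_cseq n) (Inl v)
           < position (K_vertices n) (K_edges n) (greedy_cseq n) (Inr e)"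
    by (simp add: position_greedy_cseq[OF elems(1)] position_greedy_cseq[OF elems(2)] greedy_pos_def)
qed

lemma cseq_cost_greedy_cseq:
  assumes "n \<ge> 1"
  defines "L \<equiv> n + (n choose 2)"
  shows "cseq_cost (K_vertices n) (K_edges n) (greedy_cseq n)
       = int (L * (L + 1)) - int (n + 1) * int (\<Sum>k = 1..n. (k choose 2) + 1)"
proof -
  let ?V = "K_vertices n" and ?E = "K_edges n"
  have L: "card ?V + card ?E = L"
    by (simp add: L_def card_K_edges K_vertices_def)
  have degree_add_2: "n - 1 + 2 = n + 1"
    using assms(1) by simp
  have position: "position ?V ?E (greedy_cseq n) (Inl v) = (v choose 2) + 1" if "v \<in> ?V" for v
    using that by (simp add: position_greedy_cseq elems_def greedy_pos_def)
  have "(\<Sum>v\<in>?V. int (degree ?E v + 2) * int (position ?V ?E (greedy_cseq n) (Inl v)))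
      = (\<Sum>v\<in>?V. int (n + 1) * int ((v choose 2) + 1))" (is "?vertex_sum = _")
    by (intro sum.cong) (simp_all only: degree_K degree_add_2 position)
  also have "\<dots> = int (n + 1) * int (\<Sum>k = 1..n. (k choose 2) + 1)"
    by (simp add: sum_distrib_left K_vertices_def)
  finally have vertex_sum: "?vertex_sum = int (n + 1) * int (\<Sum>k = 1..n. (k choose 2) + 1)" .
  show ?thesis
    unfolding cseq_cost_eq_degree[OF simple_graph_K c_sequence_greedy_cseq] L vertex_sum
    by (rule refl)
qed

lemma nu_star_K:
  assumes "n \<ge> 1"
  defines "L \<equiv> n + (n choose 2)"
  shows "nu_star (K_vertices n) (K_edges n)
       = int (L * (L + 1)) - int (n + 1) * int (\<Sum>k = 1..n. (k choose 2) + 1)"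
proof -
  let ?V = "K_vertices n" and ?E = "K_edges n"
  have L: "card ?V + card ?E = L" and card_V: "card ?V = n" and degree_add_2: "n - 1 + 2 = n + 1"
    using assms(1) by (simp_all add: L_def card_K_edges K_vertices_def)
  note greedy_cost = cseq_cost_greedy_cseq[OF assms(1), folded L_def]
  have "cseq_cost ?V ?E (greedy_cseq n) \<le> cseq_cost ?V ?E y" if "c_sequence ?V ?E y" for y
  proof -
    have "int (L * (L + 1)) - int (n - 1 + 2) * int (\<Sum>k = 1..card ?V. (k choose 2) + 1)
        \<le> cseq_cost ?V ?E y"
      unfolding L[symmetric] by (rule cseq_cost_ge_regular[OF simple_graph_K that degree_K])
    then show ?thesis
      unfolding greedy_cost by (simp only: card_V degree_add_2)
  qed
  then have "nu_star ?V ?E = cseq_cost ?V ?E (greedy_cseq n)"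
    by (intro nu_star_eqI simple_graph_K c_sequence_greedy_cseq)
  then show ?thesis
    unfolding greedy_cost .
qed

lemma two_mult_Suc_choose_two: "2 * (Suc n choose 2) = Suc n * n"
  by (induction n) (simp_all add: numeral_2_eq_2)

lemma six_mult_sum_choose_two_Suc: "6 * (\<Sum>k = 1..n. (k choose 2) + 1) = n ^ 3 + 5 * n"
proof (induction n)
  case (Suc n)
  then show ?case
    using two_mult_Suc_choose_two[of n] by (simp add: algebra_simps power3_eq_cube)
qed simp

theorem theorem8:
  fixes n :: nat
  assumes "n \<ge> 1"
  shows "real_of_int (nu_star (K_vertices n) (K_edges n))
           = real ((n - 1) * n * (n + 1) * (n + 4)) / 12"
proof -
  define L where "L = n + (n choose 2)"
  define S where "S = (\<Sum>k = 1..n. (k choose 2) + 1)"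
  have nu: "nu_star (K_vertices n) (K_edges n) = int L * (int L + 1) - (int n + 1) * int S"
    using nu_star_K[OF assms, folded L_def S_def] by (simp add: algebra_simps)
  have L: "2 * int L = int n * (int n + 1)"
    using arg_cong[OF two_mult_Suc_choose_two[of n], of int]
    by (simp add: L_def numeral_2_eq_2 algebra_simps)
  have S: "6 * int S = int n ^ 3 + 5 * int n"
    using arg_cong[OF six_mult_sum_choose_two_Suc[of n], of int] by (simp add: S_def)
  have "12 * nu_star (K_vertices n) (K_edges n) = (int n - 1) * int n * (int n + 1) * (int n + 4)"
    unfolding nu using L S by algebra
  also have "\<dots> = int ((n - 1) * n * (n + 1) * (n + 4))"
    using assms by (simp only: of_nat_mult of_nat_diff of_nat_add of_nat_1 of_nat_numeral)
  finally have "real_of_int (12 * nu_star (K_vertices n) (K_edges n)) = real ((n - 1) * n * (n + 1) * (n + 4))"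
    by simp
  then show ?thesis
    by simp
qed

end
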